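(* For every NFA $\mathcal A$, the relation $P(\subseteq^{\mathrm{bw}},\sqsubset^{\mathrm{di}})$ is good for pruning on NFA: $\mathcal L(\mathrm{Prune}(\mathcal A,P(\subseteq^{\mathrm{bw}},\sqsubset^{\mathrm{di}})))=\mathcal L(\mathcal A)$.
   Context: An NFA is $\mathcal A=(\Sigma,Q,I,F,\delta)$, $\delta\subseteq Q\times\Sigma\times Q$, assumed forward and backward complete; its language is the set of finite words having a finite trace starting in $I$ and ending in $F$. Direct simulation $\sqsubseteq^{\mathrm{di}}$: in the game from $(p_0,q_0)$, at round $i$ from $(p_i,q_i)$ Spoiler picks $p_i\xrightarrow{\sigma_i}p_{i+1}$, Duplicator answers $q_i\xrightarrow{\sigma_i}q_{i+1}$; Duplicator wins the infinite play if $p_i\in F\Rightarrow q_i\in F$ for all $i$; $p\sqsubseteq^{\mathrm{di}}q$ iff she has a winning strategy from $(p,q)$; $\sqsubset^{\mathrm{di}}$ is its strict part. Backward finite trace inclusion: $p\subseteq^{\mathrm{bw}}q$ iff for every finite word $w$, if some $w$-trace starting in $I$ ends in $p$, then some $w$-trace starting in $I$ ends in $q$. $\mathrm{Prune}(\mathcal A,P)$ has transition set $\{t\in\delta:\nexists t'\in\delta,(t,t')\in P\}$; $P(R_b,R_f)=\{((p,\sigma,r),(p',\sigma,r'))\in\delta\times\delta:p\,R_b\,p',\ r\,R_f\,r'\}$. *)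

theory Defs
  imports Main
begin

record ('s, 'q) nfa =
  alph   :: "'s set"
  states :: "'q set"
  init   :: "'q set"
  final  :: "'q set"
  trans  :: "('q \<times> 's \<times> 'q) set"

definition is_nfa :: "('s, 'q) nfa \<Rightarrow> bool" where
  "is_nfa A \<longleftrightarrow>
     finite (alph A) \<and> finite (states A) \<and>
     init A \<subseteq> states A \<and> final A \<subseteq> states A \<and>
     trans A \<subseteq> states A \<times> alph A \<times> states A \<and>
     (\<forall>p\<in>states A. \<forall>a\<in>alph A. \<exists>q. (p, a, q) \<in> trans A) \<and>
     (\<forall>q\<in>states A. \<forall>a\<in>alph A. \<exists>p. (p, a, q) \<in> trans A)"

inductive path :: "('q \<times> 's \<times> 'q) set \<Rightarrow> 'q \<Rightarrow> 's list \<Rightarrow> 'q \<Rightarrow> bool"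
  for D where
  path_nil: "path D p [] p"
| path_cons: "(p, a, r) \<in> D \<Longrightarrow> path D r w q \<Longrightarrow> path D p (a # w) q"

definition lang :: "('s, 'q) nfa \<Rightarrow> 's list set" where
  "lang A = {w. \<exists>p\<in>init A. \<exists>q\<in>final A. path (trans A) p w q}"

coinductive dsim :: "('s, 'q) nfa \<Rightarrow> 'q \<Rightarrow> 'q \<Rightarrow> bool" for A where
  "\<lbrakk> p \<in> final A \<longrightarrow> q \<in> final A;
     \<And>a p'. (p, a, p') \<in> trans A \<Longrightarrow> \<exists>q'. (q, a, q') \<in> trans A \<and> dsim A p' q' \<rbrakk>
   \<Longrightarrow> dsim A p q"

definition dsim_strict :: "('s, 'q) nfa \<Rightarrow> 'q \<Rightarrow> 'q \<Rightarrow> bool" where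
  "dsim_strict A p q \<longleftrightarrow> dsim A p q \<and> \<not> dsim A q p"

definition bw_incl :: "('s, 'q) nfa \<Rightarrow> 'q \<Rightarrow> 'q \<Rightarrow> bool" where
  "bw_incl A p q \<longleftrightarrow>
     (\<forall>w. (\<exists>i\<in>init A. path (trans A) i w p) \<longrightarrow> (\<exists>i\<in>init A. path (trans A) i w q))"

definition prune :: "('s, 'q) nfa \<Rightarrow> (('q \<times> 's \<times> 'q) \<times> ('q \<times> 's \<times> 'q)) set \<Rightarrow> ('s, 'q) nfa" where
  "prune A P = A\<lparr> trans := {t \<in> trans A. \<not> (\<exists>t'\<in>trans A. (t, t') \<in> P)} \<rparr>"

definition prune_rel :: "('s, 'q) nfa \<Rightarrow> ('q \<Rightarrow> 'q \<Rightarrow> bool) \<Rightarrow> ('q \<Rightarrow> 'q \<Rightarrow> bool)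
    \<Rightarrow> (('q \<times> 's \<times> 'q) \<times> ('q \<times> 's \<times> 'q)) set" where
  "prune_rel A Rb Rf = {((p, a, r), (p', a', r')). (p, a, r) \<in> trans A \<and> (p', a', r') \<in> trans A
       \<and> a' = a \<and> Rb p p' \<and> Rf r r'}"

end

theory Submission
  imports Defs
begin

text \<open>Every state reachable by a word w in A is direct-simulated by a state reachable by w
  in the pruned automaton; since direct simulation preserves finality, accepting runs survive.
  The induction on w appends one letter: a run ending with a transition (p, a, r) is moved to a
  state p' simulating p, which answers with some (p', a, r1). If that transition was pruned, the
  witness (p'', a, r2) has p'' reachable by the same word (backward inclusion) and r2 strictly
  simulating r1, so we may retry from r2. Strict simulation is a strict preorder on the finite
  state set, so the retries terminate.\<close>

lemma path_mono: "path D p w q \<Longrightarrow> D \<subseteq> E \<Longrightarrow> path E p w q"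
  by (induction rule: path.induct) (auto intro: path.intros)

lemma path_Nil_iff: "path D p [] q \<longleftrightarrow> p = q"
  by (auto elim: path.cases intro: path.intros)

lemma path_Cons_iff: "path D p (a # w) q \<longleftrightarrow> (\<exists>r. (p, a, r) \<in> D \<and> path D r w q)"
  by (auto elim: path.cases intro: path.intros)

lemma path_snoc_iff: "path D p (w @ [a]) q \<longleftrightarrow> (\<exists>r. path D p w r \<and> (r, a, q) \<in> D)"
  by (induction w arbitrary: p) (auto simp: path_Cons_iff path_Nil_iff)

definition reached :: "('s, 'q) nfa \<Rightarrow> 's list \<Rightarrow> 'q \<Rightarrow> bool" where
  "reached A w q \<longleftrightarrow> (\<exists>i\<in>init A. path (trans A) i w q)"

lemma reached_Nil: "reached A [] q \<longleftrightarrow> q \<in> init A"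
  by (simp add: reached_def path_Nil_iff)

lemma reached_snoc_iff: "reached A (w @ [a]) q \<longleftrightarrow> (\<exists>p. reached A w p \<and> (p, a, q) \<in> trans A)"
  by (auto simp: reached_def path_snoc_iff)

lemma lang_eq_reached: "lang A = {w. \<exists>q\<in>final A. reached A w q}"
  by (auto simp: lang_def reached_def)

lemma bw_incl_reached: "bw_incl A p q \<Longrightarrow> reached A w p \<Longrightarrow> reached A w q"
  by (simp add: bw_incl_def reached_def)

lemma init_prune [simp]: "init (prune A P) = init A"
  and final_prune [simp]: "final (prune A P) = final A"
  by (simp_all add: prune_def)

lemma trans_prune_subset: "trans (prune A P) \<subseteq> trans A"
  by (auto simp: prune_def)

lemma reached_prune: "reached (prune A P) w q \<Longrightarrow> reached A w q"
  unfolding reached_def using path_mono[OF _ trans_prune_subset[of A P]] by auto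

lemma lang_prune_subset: "lang (prune A P) \<subseteq> lang A"
  by (auto simp: lang_eq_reached dest: reached_prune)

lemma dsim_refl: "dsim A p p"
  by (coinduction arbitrary: p) auto

lemma dsim_final: "dsim A p q \<Longrightarrow> p \<in> final A \<Longrightarrow> q \<in> final A"
  by (auto elim: dsim.cases)

lemma dsim_step:
  "dsim A p q \<Longrightarrow> (p, a, p') \<in> trans A \<Longrightarrow> \<exists>q'. (q, a, q') \<in> trans A \<and> dsim A p' q'"
  by (auto elim: dsim.cases)

lemma dsim_trans: "dsim A p q \<Longrightarrow> dsim A q r \<Longrightarrow> dsim A p r"
proof (coinduction arbitrary: p q r)
  case dsim
  then show ?case by (metis dsim.cases)
qed

lemma dsim_strict_irrefl: "\<not> dsim_strict A p p"
  by (simp add: dsim_strict_def)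

lemma dsim_dsim_strict_trans: "dsim A p q \<Longrightarrow> dsim_strict A q r \<Longrightarrow> dsim_strict A p r"
  by (meson dsim_strict_def dsim_trans)

lemma dsim_strict_trans: "dsim_strict A p q \<Longrightarrow> dsim_strict A q r \<Longrightarrow> dsim_strict A p r"
  by (meson dsim_strict_def dsim_trans)

lemma wf_dsim_strict:
  assumes "finite S"
  shows "wf {(s, r). s \<in> S \<and> dsim_strict A r s}"
proof (rule wf_subset)
  let ?above = "\<lambda>r. {t \<in> S. dsim_strict A r t}"
  show "wf (measure (\<lambda>r. card (?above r)))" by simp
  have "card (?above s) < card (?above r)" if "s \<in> S" "dsim_strict A r s" for r s
  proof (rule psubset_card_mono)
    show "?above s \<subset> ?above r"
      using that dsim_strict_trans[of A r s] dsim_strict_irrefl[of A s] by auto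
  qed (use assms in simp)
  then show "{(s, r). s \<in> S \<and> dsim_strict A r s} \<subseteq> measure (\<lambda>r. card (?above r))"
    by auto
qed

lemma pruned_transition_dominated:
  assumes "(p, a, r) \<in> trans A" "(p, a, r) \<notin> trans (prune A (prune_rel A Rb Rf))"
  obtains p' r' where "(p', a, r') \<in> trans A" "Rb p p'" "Rf r r'"
  using assms by (auto simp: prune_def prune_rel_def)

abbreviation prune_bw_di :: "('s, 'q) nfa \<Rightarrow> ('s, 'q) nfa" where
  "prune_bw_di A \<equiv> prune A (prune_rel A (bw_incl A) (dsim_strict A))"

lemma reached_prune_bw_di_snoc:
  assumes nfa: "is_nfa A"
    and IH: "\<And>p. reached A w p \<Longrightarrow> \<exists>p'. dsim A p p' \<and> reached (prune_bw_di A) w p'"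
    and "reached A w p" "(p, a, r) \<in> trans A"
  shows "\<exists>r'. dsim A r r' \<and> reached (prune_bw_di A) (w @ [a]) r'"
proof -
  have trans_states: "trans A \<subseteq> states A \<times> alph A \<times> states A"
    using nfa by (simp add: is_nfa_def)
  have wf: "wf {(s, r). s \<in> states A \<and> dsim_strict A r s}"
    using nfa by (simp add: is_nfa_def wf_dsim_strict)
  from wf \<open>reached A w p\<close> \<open>(p, a, r) \<in> trans A\<close> show ?thesis
  proof (induction r arbitrary: p rule: wf_induct_rule)
    case (less r)
    obtain p' where "dsim A p p'" and p': "reached (prune_bw_di A) w p'"
      using IH less.prems(1) by blast
    then obtain r1 where t1: "(p', a, r1) \<in> trans A" and "dsim A r r1"
      using dsim_step less.prems(2) by metis
    show ?case
    proof (cases "(p', a, r1) \<in> trans (prune_bw_di A)")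
      case True
      with p' have "reached (prune_bw_di A) (w @ [a]) r1"
        by (auto simp: reached_snoc_iff)
      with \<open>dsim A r r1\<close> show ?thesis by blast
    next
      case False
      with t1 obtain p'' r2 where t2: "(p'', a, r2) \<in> trans A"
        and "bw_incl A p' p''" and "dsim_strict A r1 r2"
        by (rule pruned_transition_dominated)
      have "reached A w p''"
        using \<open>bw_incl A p' p''\<close> reached_prune[OF p'] by (rule bw_incl_reached)
      have r2: "dsim_strict A r r2"
        using \<open>dsim A r r1\<close> \<open>dsim_strict A r1 r2\<close> by (rule dsim_dsim_strict_trans)
      moreover have "r2 \<in> states A"
        using t2 trans_states by auto
      ultimately obtain r' where "dsim A r2 r'" and r': "reached (prune_bw_di A) (w @ [a]) r'"
        using less.IH \<open>reached A w p''\<close> t2 by blast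
      with r2 have "dsim A r r'"
        by (simp add: dsim_strict_def dsim_trans[of A r r2 r'])
      with r' show ?thesis by blast
    qed
  qed
qed

lemma reached_prune_bw_di:
  assumes "is_nfa A" "reached A w q"
  shows "\<exists>q'. dsim A q q' \<and> reached (prune_bw_di A) w q'"
  using assms(2)
proof (induction w arbitrary: q rule: rev_induct)
  case Nil
  then show ?case
    by (auto simp: reached_Nil intro: dsim_refl)
next
  case (snoc a w)
  then obtain p where "reached A w p" "(p, a, q) \<in> trans A"
    by (auto simp: reached_snoc_iff)
  then show ?case
    using reached_prune_bw_di_snoc[OF assms(1) snoc.IH] by blast
qed

theorem theorem5p9:
  fixes A :: "('s, 'q) nfa"
  assumes "is_nfa A"
  shows "lang (prune A (prune_rel A (bw_incl A) (dsim_strict A))) = lang A"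
proof
  show "lang A \<subseteq> lang (prune_bw_di A)"
  proof
    fix w assume "w \<in> lang A"
    then obtain q where "q \<in> final A" "reached A w q"
      by (auto simp: lang_eq_reached)
    then obtain q' where "dsim A q q'" "reached (prune_bw_di A) w q'"
      using reached_prune_bw_di[OF assms] by blast
    then show "w \<in> lang (prune_bw_di A)"
      using \<open>q \<in> final A\<close> dsim_final[of A q q'] by (auto simp: lang_eq_reached)
  qed
qed (rule lang_prune_subset)

end
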